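(* Let $n,N\ge 1$ and $\varepsilon\ge 0$ be integers with $\varepsilon/n\le 1/2$ and $N<2^{n(1-h(\varepsilon/n))-1}$. Let $p=1-(1-V_\varepsilon)^N$ be the success probability of a single trial of the attacker, and let $m_{out}=-\ln 2/\ln(1-p)$ be the median number of trials for the attacker to successfully impersonate a user. Then $$m_{out}=\Omega\left(2^{n(1-h(\varepsilon/n))-\log_2 N}\right)\quad\text{and}\quad m_{out}=O\left(2^{n(1-h(\varepsilon/n))+\frac{1}{2}\log_2\left(\varepsilon\left(1-\frac{\varepsilon}{n}\right)\right)-\log_2 N}\right),$$ where $h$ is the binary entropy function.
   Context: Templates are binary vectors in $\mathbb{Z}_2^n$ compared with the Hamming distance $d_{\mathcal H}$; a guess $t$ is accepted against an enrolled template $v$ if $d_{\mathcal H}(t,v)\le\varepsilon$. The $N$ enrolled templates are independent and uniformly distributed in $\mathbb{Z}_2^n$, and the (outsider) attacker generates independent uniformly random templates until one is within distance $\varepsilon$ of some enrolled template. $B_\varepsilon(t)=\{y\in\mathbb{Z}_2^n: d_{\mathcal H}(t,y)\le\varepsilon\}$, $|B_\varepsilon|=\sum_{k=0}^{\varepsilon}\binom{n}{k}$, and $V_\varepsilon=|B_\varepsilon|/2^n$. The binary entropy function is $h(x)=-x\log_2 x-(1-x)\log_2(1-x)$. *)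

theory Defs
  imports Complex_Main
begin

text \<open>Binary entropy function h(x) = - x log2 x - (1-x) log2 (1-x).
  (At x = 0 the product 0 * log 2 0 is 0 in Isabelle, matching the usual convention.)\<close>
definition bin_entropy :: "real \<Rightarrow> real" where
  "bin_entropy x = - x * log 2 x - (1 - x) * log 2 (1 - x)"

definition ball_size :: "nat \<Rightarrow> nat \<Rightarrow> nat" where
  "ball_size n eps = (\<Sum>k\<le>eps. n choose k)"

definition rel_vol :: "nat \<Rightarrow> nat \<Rightarrow> real" where
  "rel_vol n eps = real (ball_size n eps) / 2 ^ n"

definition succ_prob :: "nat \<Rightarrow> nat \<Rightarrow> nat \<Rightarrow> real" where
  "succ_prob n N eps = 1 - (1 - rel_vol n eps) ^ N"

definition m_out :: "nat \<Rightarrow> nat \<Rightarrow> nat \<Rightarrow> real" where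
  "m_out n N eps = - ln 2 / ln (1 - succ_prob n N eps)"

end

theory Submission
  imports Defs
begin

text \<open>Put p = eps/n \<le> 1/2. The quantity 2^n p^eps (1-p)^(n-eps) equals 2 powr (n (1 - h p)),
  so the question is how the ball volume V compares with p^eps (1-p)^(n-eps). Because p \<le> 1 - p,
  each term (n choose j) p^eps (1-p)^(n-eps) of that product with j \<le> eps is dominated by the
  binomial probability (n choose j) p^j (1-p)^(n-j), whence V \<le> 2 powr (- n (1 - h p)).
  Conversely the product is at least its term j = eps, the binomial probability of the mean eps,
  which is also the mode; by Chebyshev's inequality (the variance is eps (1-p)) three quarters of
  the mass lies within distance 2 sqrt (eps (1-p)) of eps, so that probability is at least
  1/(8 sqrt (eps (1-p))).
  Finally m_out = ln 2 / (N (- ln (1 - V))), and - ln (1 - V) lies between V and 2V because the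
  hypothesis on N forces V < 1/2.\<close>

definition binomial_weight :: "nat \<Rightarrow> real \<Rightarrow> nat \<Rightarrow> real" where
  "binomial_weight n p j = real (n choose j) * p ^ j * (1 - p) ^ (n - j)"

lemma binomial_weight_nonneg: "0 \<le> p \<Longrightarrow> p \<le> 1 \<Longrightarrow> 0 \<le> binomial_weight n p j"
  unfolding binomial_weight_def by simp

lemma sum_binomial_weight: "(\<Sum>j\<le>n. binomial_weight n p j) = 1"
  unfolding binomial_weight_def using binomial_ring[of p "1 - p" n] by simp

lemma sum_binomial_first_moment:
  fixes x y :: real
  shows "(\<Sum>j\<le>n. real j * (real (n choose j) * x ^ j * y ^ (n - j)))
    = real n * x * (x + y) ^ (n - 1)"
proof (cases n)
  case (Suc m)
  have "(\<Sum>j\<le>Suc m. real j * (real (Suc m choose j) * x ^ j * y ^ (Suc m - j)))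
      = (\<Sum>i\<le>m. real (Suc i) * real (Suc m choose Suc i) * x ^ Suc i * y ^ (m - i))"
    by (subst sum.atMost_Suc_shift) (simp add: mult_ac)
  also have "\<dots> = (\<Sum>i\<le>m. real (Suc m) * x * (real (m choose i) * x ^ i * y ^ (m - i)))"
  proof (rule sum.cong)
    fix i
    have "real (Suc i) * real (Suc m choose Suc i) = real (Suc m) * real (m choose i)"
      by (metis Suc_times_binomial of_nat_mult)
    then show "real (Suc i) * real (Suc m choose Suc i) * x ^ Suc i * y ^ (m - i)
      = real (Suc m) * x * (real (m choose i) * x ^ i * y ^ (m - i))"
      by (metis (no_types, lifting) mult.assoc mult.left_commute power_Suc)
  qed simp
  also have "\<dots> = real (Suc m) * x * (x + y) ^ m"
    by (simp add: binomial_ring flip: sum_distrib_left)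
  finally show ?thesis using Suc by simp
qed simp

lemma sum_binomial_second_factorial_moment:
  fixes x y :: real
  shows "(\<Sum>j\<le>n. real j * (real j - 1) * (real (n choose j) * x ^ j * y ^ (n - j)))
    = real n * (real n - 1) * x\<^sup>2 * (x + y) ^ (n - 2)"
proof (cases n)
  case (Suc m)
  have "(\<Sum>j\<le>Suc m. real j * (real j - 1) * (real (Suc m choose j) * x ^ j * y ^ (Suc m - j)))
      = (\<Sum>i\<le>m. real i * (real (Suc i) * real (Suc m choose Suc i) * x ^ Suc i * y ^ (m - i)))"
    by (subst sum.atMost_Suc_shift) (simp add: mult_ac)
  also have "\<dots> = (\<Sum>i\<le>m. real (Suc m) * x * (real i * (real (m choose i) * x ^ i * y ^ (m - i))))"
  proof (rule sum.cong)
    fix i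
    have "real (Suc i) * real (Suc m choose Suc i) = real (Suc m) * real (m choose i)"
      by (metis Suc_times_binomial of_nat_mult)
    then show "real i * (real (Suc i) * real (Suc m choose Suc i) * x ^ Suc i * y ^ (m - i))
      = real (Suc m) * x * (real i * (real (m choose i) * x ^ i * y ^ (m - i)))"
      by (metis (no_types, lifting) mult.assoc mult.left_commute power_Suc)
  qed simp
  also have "\<dots> = real (Suc m) * x * (real m * x * (x + y) ^ (m - 1))"
    by (simp add: sum_binomial_first_moment flip: sum_distrib_left)
  finally show ?thesis using Suc by (simp add: algebra_simps power2_eq_square)
qed simp

lemma binomial_weight_variance:
  "(\<Sum>j\<le>n. (real j - real n * p)\<^sup>2 * binomial_weight n p j) = real n * p * (1 - p)"
proof -
  let ?w = "binomial_weight n p"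
  have mean: "(\<Sum>j\<le>n. real j * ?w j) = real n * p"
    using sum_binomial_first_moment[of n p "1 - p"] by (simp add: binomial_weight_def mult.assoc)
  have factorial_moment: "(\<Sum>j\<le>n. real j * (real j - 1) * ?w j) = real n * (real n - 1) * p\<^sup>2"
    using sum_binomial_second_factorial_moment[of n p "1 - p"]
    by (simp add: binomial_weight_def mult.assoc)
  have "(\<Sum>j\<le>n. (real j - real n * p)\<^sup>2 * ?w j)
      = (\<Sum>j\<le>n. real j * (real j - 1) * ?w j + (1 - 2 * real n * p) * (real j * ?w j)
          + (real n * p)\<^sup>2 * ?w j)"
    by (rule sum.cong) (simp_all add: algebra_simps power2_eq_square)
  also have "\<dots> = (\<Sum>j\<le>n. real j * (real j - 1) * ?w j) + (1 - 2 * real n * p) * (\<Sum>j\<le>n. real j * ?w j)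
      + (real n * p)\<^sup>2 * (\<Sum>j\<le>n. ?w j)"
    by (simp add: sum.distrib sum_distrib_left)
  also have "\<dots> = real n * p * (1 - p)"
    unfolding mean factorial_moment sum_binomial_weight by (simp add: algebra_simps power2_eq_square)
  finally show ?thesis .
qed

lemma binomial_weight_Suc:
  assumes "j < n"
  shows "binomial_weight n p (Suc j) * (real (Suc j) * (1 - p))
    = binomial_weight n p j * (real (n - j) * p)"
proof -
  have "Suc j * (n choose Suc j) = (n - j) * (n choose j)"
    by (metis binomial_absorption binomial_absorb_comp)
  then have choose: "real (Suc j) * real (n choose Suc j) = real (n - j) * real (n choose j)"
    by (metis of_nat_mult)
  have power: "(1 - p) ^ (n - Suc j) * (1 - p) = (1 - p) ^ (n - j)"
    using assms by (simp flip: power_Suc2 add: Suc_diff_Suc)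
  have "binomial_weight n p (Suc j) * (real (Suc j) * (1 - p))
      = (real (Suc j) * real (n choose Suc j)) * p ^ Suc j * ((1 - p) ^ (n - Suc j) * (1 - p))"
    by (simp only: binomial_weight_def mult_ac)
  also have "\<dots> = binomial_weight n p j * (real (n - j) * p)"
    unfolding choose power binomial_weight_def by (simp add: mult_ac)
  finally show ?thesis .
qed

lemma binomial_weight_mode_step:
  assumes "k < n" "i < n"
  shows binomial_weight_increasing_step: "i < k \<Longrightarrow>
      binomial_weight n (real k / real n) i \<le> binomial_weight n (real k / real n) (Suc i)"
    and binomial_weight_decreasing_step: "k \<le> i \<Longrightarrow>
      binomial_weight n (real k / real n) (Suc i) \<le> binomial_weight n (real k / real n) i"
proof -
  let ?w = "binomial_weight n (real k / real n)"
  have n_pos: "real n > 0" using assms by simp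
  have q: "(1 - real k / real n) * real n = real (n - k)" and p: "real k / real n * real n = real k"
    using n_pos assms by (simp_all add: field_simps of_nat_diff)
  have "?w (Suc i) * (real (Suc i) * real (n - k))
      = ?w (Suc i) * (real (Suc i) * (1 - real k / real n)) * real n"
    by (simp only: q[symmetric] mult_ac)
  also have "\<dots> = ?w i * (real (n - i) * (real k / real n)) * real n"
    by (simp only: binomial_weight_Suc[OF assms(2)])
  also have "\<dots> = ?w i * (real k * real (n - i))"
    using p by (simp add: mult_ac)
  finally have ratio: "?w (Suc i) * (real (Suc i) * real (n - k)) = ?w i * (real k * real (n - i))" .
  have c_pos: "0 < real (Suc i) * real (n - k)" using assms by simp
  have w_nonneg: "0 \<le> ?w j" for j
    using assms by (intro binomial_weight_nonneg) (simp_all add: field_simps)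
  show "?w i \<le> ?w (Suc i)" if "i < k"
  proof -
    have "Suc i * (n - k) \<le> k * (n - i)" using that by (intro mult_mono) auto
    then have "real (Suc i) * real (n - k) \<le> real k * real (n - i)"
      by (metis of_nat_le_iff of_nat_mult)
    then have "?w i * (real (Suc i) * real (n - k)) \<le> ?w i * (real k * real (n - i))"
      using w_nonneg by (rule mult_left_mono)
    then show ?thesis unfolding ratio[symmetric] using c_pos by (rule mult_right_le_imp_le)
  qed
  show "?w (Suc i) \<le> ?w i" if "k \<le> i"
  proof -
    have "k * (n - i) \<le> Suc i * (n - k)" using that by (intro mult_mono) auto
    then have "real k * real (n - i) \<le> real (Suc i) * real (n - k)"
      by (metis of_nat_le_iff of_nat_mult)
    then have "?w (Suc i) * (real (Suc i) * real (n - k)) \<le> ?w i * (real (Suc i) * real (n - k))"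
      unfolding ratio using w_nonneg by (rule mult_left_mono)
    then show ?thesis using c_pos by (rule mult_right_le_imp_le)
  qed
qed

lemma binomial_weight_le_mode:
  assumes "k < n" "j \<le> n"
  shows "binomial_weight n (real k / real n) j \<le> binomial_weight n (real k / real n) k"
proof (cases "j \<le> k")
  case True
  then show ?thesis
  proof (induction j rule: inc_induct)
    case (step i)
    then show ?case using binomial_weight_increasing_step[of k n i] assms by simp
  qed simp
next
  case False
  then have "k \<le> j" by simp
  then show ?thesis using assms(2)
  proof (induction j rule: dec_induct)
    case (step i)
    then show ?case using binomial_weight_decreasing_step[of k n i] assms by simp
  qed simp
qed

lemma chebyshev_sum:
  fixes w x :: "'a \<Rightarrow> real"
  assumes "finite A" "\<And>j. j \<in> A \<Longrightarrow> 0 \<le> w j" "0 < r"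
  shows "(\<Sum>j\<in>{j\<in>A. r \<le> \<bar>x j - \<mu>\<bar>}. w j) \<le> (\<Sum>j\<in>A. (x j - \<mu>)\<^sup>2 * w j) / r\<^sup>2"
proof -
  have "(\<Sum>j\<in>{j\<in>A. r \<le> \<bar>x j - \<mu>\<bar>}. w j) \<le> (\<Sum>j\<in>{j\<in>A. r \<le> \<bar>x j - \<mu>\<bar>}. (x j - \<mu>)\<^sup>2 / r\<^sup>2 * w j)"
  proof (rule sum_mono)
    fix j assume j: "j \<in> {j\<in>A. r \<le> \<bar>x j - \<mu>\<bar>}"
    then have "r\<^sup>2 \<le> (x j - \<mu>)\<^sup>2"
      using abs_le_square_iff[of r "x j - \<mu>"] assms(3) by simp
    then have "1 \<le> (x j - \<mu>)\<^sup>2 / r\<^sup>2" using assms(3) by simp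
    then show "w j \<le> (x j - \<mu>)\<^sup>2 / r\<^sup>2 * w j"
      using j assms(2) mult_right_mono[of 1 "(x j - \<mu>)\<^sup>2 / r\<^sup>2" "w j"] by simp
  qed
  also have "\<dots> \<le> (\<Sum>j\<in>A. (x j - \<mu>)\<^sup>2 / r\<^sup>2 * w j)"
    using assms by (intro sum_mono2) auto
  finally show ?thesis by (simp add: sum_divide_distrib)
qed

lemma card_nat_dist_less_le:
  fixes r :: real
  assumes "0 \<le> r"
  shows "real (card {j\<in>A. \<bar>real j - real k\<bar> < r}) \<le> 2 * r + 1"
proof -
  define m where "m = nat \<lfloor>r\<rfloor>"
  have "{j\<in>A. \<bar>real j - real k\<bar> < r} \<subseteq> {k - m .. k + m}"
  proof
    fix j assume "j \<in> {j\<in>A. \<bar>real j - real k\<bar> < r}"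
    then have "\<bar>int j - int k\<bar> \<le> \<lfloor>r\<rfloor>"
      by (simp add: le_floor_iff)
    then show "j \<in> {k - m .. k + m}" unfolding m_def by auto
  qed
  then have "card {j\<in>A. \<bar>real j - real k\<bar> < r} \<le> card {k - m .. k + m}"
    by (intro card_mono) auto
  also have "\<dots> \<le> 2 * m + 1" by simp
  finally show ?thesis unfolding m_def using assms by linarith
qed

lemma binomial_weight_mode_ge:
  assumes "1 \<le> k" "2 * k \<le> n"
  shows "1 / (8 * sqrt (real k * (1 - real k / real n))) \<le> binomial_weight n (real k / real n) k"
proof -
  let ?w = "binomial_weight n (real k / real n)"
  define v where "v = real k * (1 - real k / real n)"
  define s where "s = sqrt v"
  define r where "r = 2 * s"
  define near where "near = {j\<in>{..n}. \<bar>real j - real k\<bar> < r}"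
  define far where "far = {j\<in>{..n}. r \<le> \<bar>real j - real k\<bar>}"
  have n_pos: "0 < real n" and k_lt_n: "k < n" using assms by simp_all
  have w_nonneg: "0 \<le> ?w j" for j
    using k_lt_n by (intro binomial_weight_nonneg) (simp_all add: field_simps)
  have "1 * (1/2) \<le> real k * (1 - real k / real n)"
    using assms n_pos by (intro mult_mono) (simp_all add: field_simps)
  then have v_ge: "1/2 \<le> v" by (simp add: v_def)
  then have s_ge: "1/2 \<le> s"
    unfolding s_def using real_sqrt_le_mono[of "1/4" v] by (simp add: real_sqrt_divide)
  have r_sq: "r\<^sup>2 = 4 * v"
    unfolding r_def s_def using v_ge by (simp add: power_mult_distrib)
  have "sum ?w far \<le> (\<Sum>j\<le>n. (real j - real k)\<^sup>2 * ?w j) / r\<^sup>2"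
    unfolding far_def using w_nonneg s_ge r_def by (intro chebyshev_sum) auto
  also have "\<dots> = v / r\<^sup>2"
    using binomial_weight_variance[of n "real k / real n"] n_pos by (simp add: v_def)
  also have "\<dots> = 1/4"
    using r_sq v_ge by simp
  finally have far_le: "sum ?w far \<le> 1/4" .
  have "near \<union> far = {..n}" "near \<inter> far = {}" unfolding near_def far_def by auto
  then have "sum ?w near + sum ?w far = 1"
    using sum.union_disjoint[of near far ?w] sum_binomial_weight[of n]
    by (simp add: near_def far_def)
  then have "3/4 \<le> sum ?w near" using far_le by simp
  also have "\<dots> \<le> real (card near) * ?w k"
    using sum_mono[of near ?w "\<lambda>_. ?w k"] binomial_weight_le_mode[OF k_lt_n]
    by (simp add: near_def)
  also have "\<dots> \<le> (2 * r + 1) * ?w k"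
    unfolding near_def using s_ge r_def w_nonneg
    by (intro mult_right_mono card_nat_dist_less_le) auto
  also have "\<dots> \<le> 6 * s * ?w k"
    unfolding r_def using s_ge w_nonneg by (intro mult_right_mono) auto
  finally have "1 / (8 * s) \<le> ?w k"
    using s_ge by (simp add: divide_le_eq mult_ac)
  then show ?thesis unfolding s_def v_def .
qed

lemma binom_le_ball_size: "k \<le> e \<Longrightarrow> n choose k \<le> ball_size n e"
  unfolding ball_size_def by (rule member_le_sum) auto

lemma ball_size_mult_le_one:
  fixes p :: real
  assumes "0 \<le> p" "p \<le> 1 - p" "e \<le> n"
  shows "real (ball_size n e) * (p ^ e * (1 - p) ^ (n - e)) \<le> 1"
proof -
  have "real (ball_size n e) * (p ^ e * (1 - p) ^ (n - e))
      = (\<Sum>j\<le>e. real (n choose j) * (p ^ e * (1 - p) ^ (n - e)))"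
    unfolding ball_size_def by (simp add: sum_distrib_right)
  also have "\<dots> \<le> (\<Sum>j\<le>e. binomial_weight n p j)"
  proof (rule sum_mono)
    fix j assume "j \<in> {..e}"
    then have j: "j \<le> e" by simp
    have "p ^ e * (1 - p) ^ (n - e) = p ^ j * p ^ (e - j) * (1 - p) ^ (n - e)"
      using j by (simp flip: power_add)
    also have "\<dots> \<le> p ^ j * (1 - p) ^ (e - j) * (1 - p) ^ (n - e)"
      using assms by (intro mult_right_mono mult_left_mono power_mono) auto
    also have "\<dots> = p ^ j * (1 - p) ^ (n - j)"
      using j assms(3) by (simp add: mult.assoc flip: power_add)
    finally show "real (n choose j) * (p ^ e * (1 - p) ^ (n - e)) \<le> binomial_weight n p j"
      unfolding binomial_weight_def by (simp add: mult.assoc mult_left_mono)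
  qed
  also have "\<dots> \<le> (\<Sum>j\<le>n. binomial_weight n p j)"
    using assms by (intro sum_mono2 binomial_weight_nonneg) auto
  finally show ?thesis by (simp add: sum_binomial_weight)
qed

lemma two_powr_entropy_exponent:
  assumes "k < n"
  shows "2 powr (real n * (1 - bin_entropy (real k / real n)))
    = 2 ^ n * ((real k / real n) ^ k * (1 - real k / real n) ^ (n - k))"
proof (cases "k = 0")
  case False
  define p where "p = real k / real n"
  have p_pos: "0 < p" and q_pos: "0 < 1 - p"
    unfolding p_def using assms False by (simp_all add: field_simps)
  have np: "real n * p = real k" and nq: "real n * (1 - p) = real (n - k)"
    unfolding p_def using assms by (simp_all add: field_simps of_nat_diff)
  have "log 2 (p ^ k * (1 - p) ^ (n - k)) = real k * log 2 p + real (n - k) * log 2 (1 - p)"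
    using p_pos q_pos by (simp add: log_mult_pos log_nat_power)
  also have "\<dots> = - real n * bin_entropy p"
    unfolding bin_entropy_def np[symmetric] nq[symmetric] by (simp add: algebra_simps)
  finally have "real n * (1 - bin_entropy p) = real n + log 2 (p ^ k * (1 - p) ^ (n - k))"
    by (simp add: algebra_simps)
  then show ?thesis
    using p_pos q_pos by (simp add: powr_add powr_realpow p_def)
qed (simp add: bin_entropy_def powr_realpow)

lemma rel_vol_pos: "0 < rel_vol n e"
  using binom_le_ball_size[of 0 e n] by (simp add: rel_vol_def)

lemma rel_vol_entropy_upper:
  assumes "1 \<le> n" "2 * k \<le> n"
  shows "rel_vol n k * 2 powr (real n * (1 - bin_entropy (real k / real n))) \<le> 1"
proof -
  have "real k / real n \<le> 1 - real k / real n" using assms by (simp add: field_simps)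
  then show ?thesis
    using ball_size_mult_le_one[of "real k / real n" k n] assms
    by (simp add: two_powr_entropy_exponent rel_vol_def)
qed

lemma rel_vol_entropy_lower:
  assumes "1 \<le> k" "2 * k \<le> n"
  shows "1 \<le> 8 * sqrt (real k * (1 - real k / real n))
    * (rel_vol n k * 2 powr (real n * (1 - bin_entropy (real k / real n))))"
proof -
  let ?p = "real k / real n" and ?s = "sqrt (real k * (1 - real k / real n))"
  have s_pos: "0 < ?s" using assms by (simp add: field_simps)
  have "1 / (8 * ?s) \<le> binomial_weight n ?p k"
    using assms by (rule binomial_weight_mode_ge)
  also have "\<dots> \<le> real (ball_size n k) * (?p ^ k * (1 - ?p) ^ (n - k))"
    unfolding binomial_weight_def using binom_le_ball_size[of k k n] assms
    by (simp add: mult.assoc mult_right_mono)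
  also have "\<dots> = rel_vol n k * 2 powr (real n * (1 - bin_entropy ?p))"
    using assms by (simp add: two_powr_entropy_exponent rel_vol_def)
  finally show ?thesis using s_pos by (simp add: divide_le_eq mult_ac)
qed

lemma m_out_rel_vol_bounds:
  assumes "rel_vol n e \<le> 1/2" "1 \<le> N"
  shows "ln 2 / (2 * real N * rel_vol n e) \<le> m_out n N e"
    and "m_out n N e \<le> ln 2 / (real N * rel_vol n e)"
proof -
  define V where "V = rel_vol n e"
  define L where "L = - ln (1 - V)"
  have V_pos: "0 < V" unfolding V_def by (rule rel_vol_pos)
  have m_out_eq: "m_out n N e = ln 2 / (real N * L)"
    using assms by (simp add: m_out_def succ_prob_def V_def L_def ln_realpow)
  have V_le_L: "V \<le> L"
    using ln_one_minus_pos_upper_bound[of V] V_pos assms by (simp add: V_def L_def)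
  have "2 * V * V \<le> 1 * V" using V_pos assms by (intro mult_right_mono) (simp_all add: V_def)
  moreover have "- V - 2 * (V * V) \<le> ln (1 - V)"
    using ln_one_minus_pos_lower_bound[of V] V_pos assms by (simp add: V_def power2_eq_square)
  ultimately have L_le: "L \<le> 2 * V" unfolding L_def by linarith
  have N_pos: "0 < real N" using assms by simp
  show "ln 2 / (2 * real N * V) \<le> m_out n N e"
    unfolding m_out_eq using L_le V_le_L V_pos N_pos by (intro divide_left_mono) simp_all
  show "m_out n N e \<le> ln 2 / (real N * V)"
    unfolding m_out_eq using V_le_L V_pos N_pos by (intro divide_left_mono) simp_all
qed

lemma two_powr_half_log:
  assumes "0 < a"
  shows "2 powr (1/2 * log 2 a) = sqrt a"
proof -
  have "2 powr (1/2 * log 2 a) = (2 powr log 2 a) powr (1/2)"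
    by (simp add: powr_powr mult.commute)
  then show ?thesis using assms by (simp add: powr_half_sqrt)
qed

lemma m_out_entropy_bounds:
  fixes n N eps :: nat
  defines "X \<equiv> real n * (1 - bin_entropy (real eps / real n))"
  assumes n: "n \<ge> 1" and N: "N \<ge> 1" and eps_ratio: "real eps / real n \<le> 1/2"
    and N_lt: "real N < 2 powr (X - 1)"
  shows m_out_entropy_lower: "ln 2 / 2 * 2 powr (X - log 2 (real N)) \<le> m_out n N eps"
    and m_out_entropy_upper: "eps \<ge> 1 \<Longrightarrow>
      m_out n N eps \<le> 8 * ln 2 * 2 powr (X + 1/2 * log 2 (real eps * (1 - real eps / real n))
        - log 2 (real N))"
proof -
  define V where "V = rel_vol n eps"
  have two_N: "2 * real N < 2 powr X" using N_lt by (simp add: powr_diff)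
  have two_eps_le: "2 * eps \<le> n" using eps_ratio n by (simp add: field_simps)
  have VH: "V * 2 powr X \<le> 1"
    unfolding V_def X_def using n two_eps_le by (rule rel_vol_entropy_upper)
  moreover have "V * 2 \<le> V * 2 powr X"
    using two_N N rel_vol_pos[of n eps] by (intro mult_left_mono) (simp_all add: V_def)
  ultimately have "V \<le> 1/2" by linarith
  note m_out_bounds = m_out_rel_vol_bounds[OF this[unfolded V_def] N, folded V_def]
  have N_pos: "0 < real N" using N by simp
  have "ln 2 / 2 * 2 powr (X - log 2 (real N)) \<le> ln 2 / (2 * real N * V)"
    using VH N_pos rel_vol_pos[of n eps] by (simp add: powr_diff V_def field_simps)
  then show "ln 2 / 2 * 2 powr (X - log 2 (real N)) \<le> m_out n N eps"
    using m_out_bounds(1) by linarith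
  assume "eps \<ge> 1"
  let ?v = "real eps * (1 - real eps / real n)"
  have v_pos: "0 < ?v" using \<open>eps \<ge> 1\<close> two_eps_le by (simp add: field_simps)
  have "1 \<le> 8 * sqrt ?v * (V * 2 powr X)"
    unfolding V_def X_def using \<open>eps \<ge> 1\<close> two_eps_le by (rule rel_vol_entropy_lower)
  then have "ln 2 / (real N * V) \<le> 8 * ln 2 * (2 powr X * sqrt ?v / real N)"
    using N_pos rel_vol_pos[of n eps] by (simp add: V_def field_simps)
  also have "2 powr X * sqrt ?v / real N = 2 powr (X + 1/2 * log 2 ?v - log 2 (real N))"
    by (simp only: powr_add powr_diff two_powr_half_log[OF v_pos] powr_log_cancel[OF _ _ N_pos])
  finally show "m_out n N eps \<le> 8 * ln 2 * 2 powr (X + 1/2 * log 2 ?v - log 2 (real N))"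
    using m_out_bounds(2) by linarith
qed

theorem theorem4p1:
  shows "\<exists>c > 0. \<exists>C > 0. \<forall>(n::nat) (N::nat) (eps::nat).
     n \<ge> 1 \<longrightarrow> N \<ge> 1 \<longrightarrow> real eps / real n \<le> 1/2 \<longrightarrow>
     real N < 2 powr (real n * (1 - bin_entropy (real eps / real n)) - 1) \<longrightarrow>
       c * 2 powr (real n * (1 - bin_entropy (real eps / real n)) - log 2 (real N))
         \<le> m_out n N eps
       \<and> (eps \<ge> 1 \<longrightarrow>
           m_out n N eps \<le> C * 2 powr (real n * (1 - bin_entropy (real eps / real n))
              + 1/2 * log 2 (real eps * (1 - real eps / real n)) - log 2 (real N)))"
proof -
  have "0 < ln (2::real) / 2" "0 < 8 * ln (2::real)" by simp_all
  then show ?thesis using m_out_entropy_lower m_out_entropy_upper by blast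
qed

end
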